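(* Consider the secure distributed linearly separable computation problem with parameters $(\mathsf K,\mathsf N,\mathsf N_{\rm r},\mathsf K_{\rm c},\mathsf M)$ where $\mathsf K_{\rm c}=1$ and $\mathsf M=\frac{\mathsf K}{\mathsf N}(\mathsf N-\mathsf N_{\rm r}+1)$. Then the optimal communication cost is $\mathsf R^\star=\mathsf N_{\rm r}$.
   Context: Problem setting. $\mathsf K,\mathsf N,\mathsf N_{\rm r},\mathsf M$ are positive integers with $\mathsf N_{\rm r}\le \mathsf N$ and $\mathsf N$ dividing $\mathsf K$. Fix a prime power $\mathsf q$ (assumed sufficiently large) and a positive integer $\mathsf L$. There are $\mathsf K$ independent datasets $D_1,\dots,D_{\mathsf K}$; the message $W_k=f_k(D_k)\in\mathbb F_{\mathsf q}^{\mathsf L}$, and $W_1,\dots,W_{\mathsf K}$ are mutually independent, each uniformly distributed over $\mathbb F_{\mathsf q}^{\mathsf L}$. Since $\mathsf K_{\rm c}=1$, the user wants $W_1+\cdots+W_{\mathsf K}$. A (secure) scheme consists of: (i) an assignment $\mathbf Z=(\mathcal Z_1,\dots,\mathcal Z_{\mathsf N})$ with $\mathcal Z_n\subseteq[\mathsf K]$ and $|\mathcal Z_n|\le \mathsf M$ (server $n$ receives the datasets indexed by $\mathcal Z_n$); (ii) a random variable $Q$ on a finite set, independent of $(D_1,\dots,D_{\mathsf K})$, given to every server but not to the user; (iii) each server $n$ sends $X_n=\psi_n(\{W_k:k\in\mathcal Z_n\},Q)\in\mathbb F_{\mathsf q}^{\mathsf T_n}$; (iv) decodability: for every $\mathcal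 A\subseteq[\mathsf N]$ with $|\mathcal A|=\mathsf N_{\rm r}$ there is a function $\phi_{\mathcal A}$ with $\phi_{\mathcal A}(\{X_n:n\in\mathcal A\})=W_1+\cdots+W_{\mathsf K}$; (v) security: $I(W_1,\dots,W_{\mathsf K};X_1,\dots,X_{\mathsf N}\mid W_1+\cdots+W_{\mathsf K})=0$. The communication cost is $\mathsf R=\max_{\mathcal A\subseteq[\mathsf N],|\mathcal A|=\mathsf N_{\rm r}}\sum_{n\in\mathcal A}\mathsf T_n/\mathsf L$, and $\mathsf R^\star$ is the minimum of $\mathsf R$ over all such secure schemes. *)

theory Defs
  imports "HOL-Probability.Probability_Mass_Function" "HOL-Algebra.Ring"
begin

text \<open>The finite field F_q is an HOL-Algebra field R with finite carrier
  (carrier taken inside nat; every finite field is isomorphic to such an R).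
  Server indices are 1..N, dataset/message indices are 1..K.
  A message tuple (W_1,...,W_K) is w :: nat => nat => nat, where w k l is the
  l-th coordinate (l < L) of W_k.\<close>

definition msg_space :: "nat ring \<Rightarrow> nat \<Rightarrow> nat \<Rightarrow> (nat \<Rightarrow> nat \<Rightarrow> nat) set" where
  "msg_space R K L = PiE {1..K} (\<lambda>_. PiE {..<L} (\<lambda>_. carrier R))"

definition msg_sum :: "nat ring \<Rightarrow> nat \<Rightarrow> nat \<Rightarrow> (nat \<Rightarrow> nat \<Rightarrow> nat) \<Rightarrow> (nat \<Rightarrow> nat)" where
  "msg_sum R K L w = (\<lambda>l\<in>{..<L}. finsum R (\<lambda>k. w k l) {1..K})"

definition cond_mutual_info :: "('a \<times> 'b \<times> 'c) pmf \<Rightarrow> real" where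
  "cond_mutual_info P =
     (let PC = map_pmf (\<lambda>(a,b,c). c) P;
          PAC = map_pmf (\<lambda>(a,b,c). (a,c)) P;
          PBC = map_pmf (\<lambda>(a,b,c). (b,c)) P
      in \<Sum>(a,b,c)\<in>set_pmf P.
           pmf P (a,b,c) *
           log 2 (pmf P (a,b,c) * pmf PC c / (pmf PAC (a,c) * pmf PBC (b,c))))"

text \<open>A secure scheme: assignment Z, lengths T, common randomness Q (a finitely
  supported distribution independent of the messages) and encoders psi, where
  psi n w q is X_n (a vector in F_q^(T n), as a list).\<close>
definition secure_scheme ::
  "nat ring \<Rightarrow> nat \<Rightarrow> nat \<Rightarrow> nat \<Rightarrow> nat \<Rightarrow> nat \<Rightarrow>
   (nat \<Rightarrow> nat set) \<Rightarrow> (nat \<Rightarrow> nat) \<Rightarrow> nat pmf \<Rightarrow>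
   (nat \<Rightarrow> (nat \<Rightarrow> nat \<Rightarrow> nat) \<Rightarrow> nat \<Rightarrow> nat list) \<Rightarrow> bool" where
  "secure_scheme R K N Nr M L Z T Q \<psi> \<longleftrightarrow>
     \<comment> \<open>(i) assignment\<close>
     (\<forall>n\<in>{1..N}. Z n \<subseteq> {1..K} \<and> card (Z n) \<le> M) \<and>
     \<comment> \<open>(ii) finitely supported randomness\<close>
     finite (set_pmf Q) \<and>
     \<comment> \<open>(iii) X_n lies in F_q^(T n) and depends only on W_k (k in Z n) and Q\<close>
     (\<forall>n\<in>{1..N}. \<forall>w\<in>msg_space R K L. \<forall>q\<in>set_pmf Q.
        length (\<psi> n w q) = T n \<and> set (\<psi> n w q) \<subseteq> carrier R) \<and>
     (\<forall>n\<in>{1..N}. \<forall>w\<in>msg_space R K L. \<forall>w'\<in>msg_space R K L. \<forall>q\<in>set_pmf Q.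
        (\<forall>k\<in>Z n. w k = w' k) \<longrightarrow> \<psi> n w q = \<psi> n w' q) \<and>
     \<comment> \<open>(iv) decodability from any Nr servers\<close>
     (\<forall>A. A \<subseteq> {1..N} \<and> card A = Nr \<longrightarrow>
        (\<exists>\<phi>. \<forall>w\<in>msg_space R K L. \<forall>q\<in>set_pmf Q.
           \<phi> (\<lambda>n\<in>A. \<psi> n w q) = msg_sum R K L w)) \<and>
     \<comment> \<open>(v) security: I(W_1..W_K ; X_1..X_N | W_1+...+W_K) = 0\<close>
     cond_mutual_info
       (map_pmf (\<lambda>(w,q). (w, (\<lambda>n\<in>{1..N}. \<psi> n w q), msg_sum R K L w))
          (pair_pmf (pmf_of_set (msg_space R K L)) Q)) = 0"

definition comm_cost :: "nat \<Rightarrow> nat \<Rightarrow> nat \<Rightarrow> (nat \<Rightarrow> nat) \<Rightarrow> real" where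
  "comm_cost N Nr L T =
     Max {(\<Sum>n\<in>A. real (T n)) / real L | A. A \<subseteq> {1..N} \<and> card A = Nr}"

text \<open>The set of achievable communication costs; R* is its least element.\<close>
definition achievable_costs ::
  "nat ring \<Rightarrow> nat \<Rightarrow> nat \<Rightarrow> nat \<Rightarrow> nat \<Rightarrow> nat \<Rightarrow> real set" where
  "achievable_costs R K N Nr M L =
     {comm_cost N Nr L T | Z T Q \<psi>. secure_scheme R K N Nr M L Z T Q \<psi>}"

end

theory Submission
  imports Defs "HOL-Algebra.Multiplicative_Group"
begin

text \<open>
  If Nr servers all lacked dataset j, changing W_j alone would leave their answers
  unchanged but change the sum, so every dataset is stored on at least N - Nr + 1 servers. With
  M = K/N (N - Nr + 1), double counting makes this tight: every dataset lies on exactly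
  N - Nr + 1 servers and every server stores M datasets. A server n holding W_j, together with the
  Nr - 1 servers lacking W_j, is a decoding set in which only X_n depends on W_j; hence X_n
  determines W_j and T_n \<ge> L, so any Nr servers send at least Nr L symbols.

  Split the datasets into N groups of K/N and let server n miss the Nr - 1 groups
  following n cyclically. For distinct field elements \<beta>_0, ..., \<beta>_N let p_g be the Lagrange
  polynomial of degree Nr - 1 that vanishes at the \<beta>_n of the servers missing group g and is 1 at
  \<beta>_0. Server n sends the L values \<Sum>_k (W_k + Z_k) p_{g(k)}(\<beta>_n), where g(k) is the group of
  k and the noise Z is uniform among tuples with zero sum. Any Nr answers are values at distinct points of one polynomial of
  degree < Nr, whose value at \<beta>_0 is \<Sum>_k W_k. Since W + Z is uniform among the tuples with
  the same sum as W, the answers are independent of W given the sum.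
\<close>

section \<open>Conditional mutual information\<close>

lemma pmf_map_pmf_finite:
  assumes "finite (set_pmf p)"
  shows "pmf (map_pmf g p) y = (\<Sum>x\<in>set_pmf p. if g x = y then pmf p x else 0)"
proof -
  have "pmf (map_pmf g p) y = measure p (g -` {y} \<inter> set_pmf p)"
    by (simp add: pmf_map measure_Int_set_pmf)
  also have "\<dots> = sum (pmf p) (g -` {y} \<inter> set_pmf p)"
    using assms by (simp add: measure_measure_pmf_finite)
  finally show ?thesis
    using assms by (simp add: sum.If_cases Int_commute vimage_def Int_def)
qed

lemma pmf_map_pair_pmf_of_set:
  assumes "finite A" "A \<noteq> {}" "finite (set_pmf Q)"
  shows "pmf (map_pmf g (pair_pmf (pmf_of_set A) Q)) y =
    (\<Sum>a\<in>A. \<Sum>q\<in>set_pmf Q. if g (a, q) = y then pmf Q q else 0) / real (card A)"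
proof -
  have "pmf (map_pmf g (pair_pmf (pmf_of_set A) Q)) y =
      (\<Sum>a\<in>A. \<Sum>q\<in>set_pmf Q. if g (a, q) = y then pmf (pair_pmf (pmf_of_set A) Q) (a, q) else 0)"
    using assms by (simp add: pmf_map_pmf_finite set_pair_pmf sum.cartesian_product)
  also have "\<dots> = (\<Sum>a\<in>A. \<Sum>q\<in>set_pmf Q. if g (a, q) = y then pmf Q q / real (card A) else 0)"
    using assms by (intro sum.cong refl) (simp add: pmf_pair)
  finally show ?thesis
    by (simp add: sum_divide_distrib if_distrib[of "\<lambda>x. x / _"] cong: if_cong)
qed

lemma cond_mutual_info_eq_0I:
  assumes factor: "\<And>a b c. (a, b, c) \<in> set_pmf P \<Longrightarrow>
    pmf P (a, b, c) * pmf (map_pmf (\<lambda>(a, b, c). c) P) c =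
    pmf (map_pmf (\<lambda>(a, b, c). (a, c)) P) (a, c) * pmf (map_pmf (\<lambda>(a, b, c). (b, c)) P) (b, c)"
  shows "cond_mutual_info P = 0"
  unfolding cond_mutual_info_def Let_def
proof (intro sum.neutral ballI)
  fix x assume x: "x \<in> set_pmf P"
  obtain a b c where abc: "x = (a, b, c)" by (cases x) auto
  have "(a, c) \<in> set_pmf (map_pmf (\<lambda>(a, b, c). (a, c)) P)"
       "(b, c) \<in> set_pmf (map_pmf (\<lambda>(a, b, c). (b, c)) P)"
    using x abc by force+
  then have "pmf (map_pmf (\<lambda>(a, b, c). (a, c)) P) (a, c) \<noteq> 0"
       "pmf (map_pmf (\<lambda>(a, b, c). (b, c)) P) (b, c) \<noteq> 0"
    by (simp_all only: pmf_eq_0_set_pmf not_not)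
  with factor[of a b c] x abc show "(case x of (a, b, c) \<Rightarrow>
      pmf P (a, b, c) * log 2 (pmf P (a, b, c) * pmf (map_pmf (\<lambda>(a, b, c). c) P) c /
        (pmf (map_pmf (\<lambda>(a, b, c). (a, c)) P) (a, c) *
         pmf (map_pmf (\<lambda>(a, b, c). (b, c)) P) (b, c)))) = 0"
    by simp
qed

lemma uniform_channel_factorization:
  fixes A :: "'w set" and Q :: "'q pmf" and X :: "'w \<Rightarrow> 'q \<Rightarrow> 'x" and S :: "'w \<Rightarrow> 's"
  defines "P \<equiv> map_pmf (\<lambda>(w, q). (w, X w q, S w)) (pair_pmf (pmf_of_set A) Q)"
  assumes fin: "finite A" and ne: "A \<noteq> {}" and fin_Q: "finite (set_pmf Q)"
    and indep: "\<And>w w'. w \<in> A \<Longrightarrow> w' \<in> A \<Longrightarrow> S w = S w' \<Longrightarrow> map_pmf (X w) Q = map_pmf (X w') Q"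
    and abc: "(a, b, c) \<in> set_pmf P"
  shows "pmf P (a, b, c) * pmf (map_pmf (\<lambda>(a, b, c). c) P) c =
    pmf (map_pmf (\<lambda>(a, b, c). (a, c)) P) (a, c) * pmf (map_pmf (\<lambda>(a, b, c). (b, c)) P) (b, c)"
proof -
  define n where "n = real (card A)"
  define H where "H w b = pmf (map_pmf (X w) Q) b" for w b
  have H: "H w b = (\<Sum>q\<in>set_pmf Q. if X w q = b then pmf Q q else 0)" for w b
    unfolding H_def using fin_Q by (rule pmf_map_pmf_finite)
  have sum_Q: "(\<Sum>q\<in>set_pmf Q. pmf Q q) = 1"
    using fin_Q by (simp add: sum_pmf_eq_1)
  have pmf_P: "pmf (map_pmf g P) y =
      (\<Sum>w\<in>A. \<Sum>q\<in>set_pmf Q. if g (w, X w q, S w) = y then pmf Q q else 0) / n"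
    for g :: "_ \<Rightarrow> 'z" and y
    unfolding P_def n_def map_pmf_comp using fin ne fin_Q
    by (subst pmf_map_pair_pmf_of_set) (simp_all add: case_prod_beta)
  have a: "a \<in> A" "S a = c" using abc fin ne by (auto simp: P_def)
  have "pmf (map_pmf id P) (a, b, c) = (\<Sum>w\<in>A. if w = a then H a b else 0) / n"
    unfolding pmf_P
    by (intro arg_cong2[where f = "(/)"] sum.cong refl) (auto simp: H a intro!: sum.cong)
  then have P: "pmf P (a, b, c) = H a b / n"
    using fin a by (simp add: sum.delta)
  have "pmf (map_pmf (\<lambda>(a, b, c). c) P) c = (\<Sum>w\<in>A. if S w = c then 1 else 0) / n"
    unfolding pmf_P by (intro arg_cong2[where f = "(/)"] sum.cong refl) (auto simp: sum_Q)
  then have C: "pmf (map_pmf (\<lambda>(a, b, c). c) P) c = real (card {w \<in> A. S w = c}) / n"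
    using fin by (simp add: sum.If_cases Int_def conj_commute)
  have "pmf (map_pmf (\<lambda>(a, b, c). (a, c)) P) (a, c) = (\<Sum>w\<in>A. if w = a then 1 else 0) / n"
    unfolding pmf_P by (intro arg_cong2[where f = "(/)"] sum.cong refl) (auto simp: sum_Q a)
  then have AC: "pmf (map_pmf (\<lambda>(a, b, c). (a, c)) P) (a, c) = 1 / n"
    using fin a by simp
  have "pmf (map_pmf (\<lambda>(a, b, c). (b, c)) P) (b, c) = (\<Sum>w\<in>A. if S w = c then H a b else 0) / n"
    unfolding pmf_P prod.case
  proof (intro arg_cong2[where f = "(/)"] sum.cong refl)
    fix w assume w: "w \<in> A"
    have "S w = c \<Longrightarrow> H w b = H a b"
      unfolding H_def using indep[OF w a(1)] a by simp
    then show "(\<Sum>q\<in>set_pmf Q. if (X w q, S w) = (b, c) then pmf Q q else 0) =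
        (if S w = c then H a b else 0)"
      by (auto simp: H)
  qed
  then have BC: "pmf (map_pmf (\<lambda>(a, b, c). (b, c)) P) (b, c) =
      real (card {w \<in> A. S w = c}) * H a b / n"
    using fin by (simp add: sum.If_cases Int_def conj_commute)
  show ?thesis unfolding P C AC BC by simp
qed

lemma cond_mutual_info_uniform_eq_0:
  assumes "finite A" "A \<noteq> {}" "finite (set_pmf Q)"
    and "\<And>w w'. w \<in> A \<Longrightarrow> w' \<in> A \<Longrightarrow> S w = S w' \<Longrightarrow> map_pmf (X w) Q = map_pmf (X w') Q"
  shows "cond_mutual_info (map_pmf (\<lambda>(w, q). (w, X w q, S w)) (pair_pmf (pmf_of_set A) Q)) = 0"
  using assms by (intro cond_mutual_info_eq_0I uniform_channel_factorization)

section \<open>Polynomials over a field\<close>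

locale UP_field = UP + R?: field R

sublocale UP_field < UP_domain
  by intro_locales [1] (rule P_def)

context UP_ring
begin

lemma deg_finsum_le:
  assumes "finite A" "f \<in> A \<rightarrow> carrier P" "\<And>i. i \<in> A \<Longrightarrow> deg R (f i) \<le> d"
  shows "deg R (finsum P f A) \<le> d"
  using assms
proof (induction A rule: finite_induct)
  case (insert a A)
  then have "deg R (f a \<oplus>\<^bsub>P\<^esub> finsum P f A) \<le> d"
    by (intro le_trans[OF deg_add]) auto
  with insert show ?case by simp
qed simp

end

context UP_cring
begin

lemma deg_finprod_le:
  assumes "finite A" "f \<in> A \<rightarrow> carrier P"
  shows "deg R (finprod P f A) \<le> (\<Sum>i\<in>A. deg R (f i))"
  using assms
proof (induction A rule: finite_induct)
  case (insert a A)
  then have "deg R (f a \<otimes>\<^bsub>P\<^esub> finprod P f A) \<le> deg R (f a) + (\<Sum>i\<in>A. deg R (f i))"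
    by (intro le_trans[OF deg_mult_ring]) auto
  with insert show ?case by simp
qed simp

lemma evalRR_finsum:
  assumes "x \<in> carrier R" "f \<in> A \<rightarrow> carrier P"
  shows "eval R R id x (finsum P f A) = (\<Oplus>i\<in>A. eval R R id x (f i))"
proof -
  interpret UP_pre_univ_prop R R id by unfold_locales simp
  interpret ring_hom_cring P R "eval R R id x" by unfold_locales (rule eval_ring_hom[OF assms(1)])
  show ?thesis using hom_finsum[OF assms(2)] by (simp add: comp_def)
qed

lemma evalRR_finprod:
  assumes "x \<in> carrier R" "f \<in> A \<rightarrow> carrier P"
  shows "eval R R id x (finprod P f A) = (\<Otimes>i\<in>A. eval R R id x (f i))"
proof -
  interpret UP_pre_univ_prop R R id by unfold_locales simp
  interpret ring_hom_cring P R "eval R R id x" by unfold_locales (rule eval_ring_hom[OF assms(1)])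
  show ?thesis using hom_finprod[OF assms(2)] by (simp add: comp_def)
qed

lemma evalRR_smult:
  assumes "x \<in> carrier R" "a \<in> carrier R" "p \<in> carrier P"
  shows "eval R R id x (a \<odot>\<^bsub>P\<^esub> p) = a \<otimes> eval R R id x p"
  using assms by (simp add: monom_mult_is_smult[symmetric] evalRR_simps)

end

context UP_domain
begin

lemma poly_eqI_eval_on_card_gt_deg:
  assumes "finite (carrier R)" "p \<in> carrier P" "q \<in> carrier P" "X \<subseteq> carrier R"
    and "deg R p < card X" "deg R q < card X"
    and "\<And>x. x \<in> X \<Longrightarrow> eval R R id x p = eval R R id x q"
  shows "p = q"
proof (rule ccontr)
  assume "p \<noteq> q"
  define d where "d = p \<ominus>\<^bsub>P\<^esub> q"
  have d: "d \<in> carrier P" "d \<noteq> \<zero>\<^bsub>P\<^esub>"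
    using assms(2,3) \<open>p \<noteq> q\<close> by (simp_all add: d_def)
  have "deg R d \<le> max (deg R p) (deg R q)"
    using deg_add[of p "\<ominus>\<^bsub>P\<^esub> q"] assms(2,3) by (simp add: d_def a_minus_def)
  moreover have "X \<subseteq> {a \<in> carrier R. eval R R id a d = \<zero>}"
    using assms(2,3,4,7) by (auto simp: d_def evalRR_simps)
  then have "card X \<le> card {a \<in> carrier R. eval R R id a d = \<zero>}"
    using roots_bound[OF d assms(1)] by (intro card_mono) auto
  ultimately show False
    using roots_bound[OF d assms(1)] assms(5,6) by linarith
qed

end

context UP_field
begin

definition lagrange_basis :: "'a \<Rightarrow> 'a set \<Rightarrow> nat \<Rightarrow> 'a" where
  "lagrange_basis x0 S =
     (\<Otimes>\<^bsub>P\<^esub> a\<in>S. inv (x0 \<ominus> a) \<odot>\<^bsub>P\<^esub> (monom P \<one> 1 \<ominus>\<^bsub>P\<^esub> monom P a 0))"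

context
  fixes x0 S
  assumes S: "finite S" "S \<subseteq> carrier R" and x0: "x0 \<in> carrier R" "x0 \<notin> S"
begin

lemma node_diff_Units: "a \<in> S \<Longrightarrow> x0 \<ominus> a \<in> Units R"
  using S x0 by (auto simp: field_Units)

lemma inv_node_diff_closed: "a \<in> S \<Longrightarrow> inv (x0 \<ominus> a) \<in> carrier R"
  using node_diff_Units by blast

lemma lagrange_basis_closed: "lagrange_basis x0 S \<in> carrier P"
  unfolding lagrange_basis_def using S inv_node_diff_closed by (auto intro!: P.finprod_closed)

lemma deg_lagrange_basis_le: "deg R (lagrange_basis x0 S) \<le> card S"
proof -
  have "deg R (inv (x0 \<ominus> a) \<odot>\<^bsub>P\<^esub> (monom P \<one> 1 \<ominus>\<^bsub>P\<^esub> monom P a 0)) \<le> 1" if "a \<in> S" for a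
    using that S inv_node_diff_closed deg_minus_monom[of a] R.carrier_one_not_zero
    by (intro le_trans[OF deg_smult_ring]) auto
  then have "deg R (lagrange_basis x0 S) \<le> (\<Sum>a\<in>S. 1)"
    unfolding lagrange_basis_def using S inv_node_diff_closed
    by (intro le_trans[OF deg_finprod_le] sum_mono) auto
  then show ?thesis by simp
qed

lemma eval_lagrange_basis:
  assumes x: "x \<in> carrier R"
  shows "eval R R id x (lagrange_basis x0 S) = (\<Otimes>a\<in>S. inv (x0 \<ominus> a) \<otimes> (x \<ominus> a))"
proof -
  have "eval R R id x (lagrange_basis x0 S) = (\<Otimes>a\<in>S.
      eval R R id x (inv (x0 \<ominus> a) \<odot>\<^bsub>P\<^esub> (monom P \<one> 1 \<ominus>\<^bsub>P\<^esub> monom P a 0)))"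
    unfolding lagrange_basis_def using x S inv_node_diff_closed by (intro evalRR_finprod) auto
  also have "\<dots> = (\<Otimes>a\<in>S. inv (x0 \<ominus> a) \<otimes> (x \<ominus> a))"
    using x S inv_node_diff_closed
    by (intro R.finprod_cong'[OF refl]) (auto simp: evalRR_smult evalRR_simps)
  finally show ?thesis .
qed

lemma eval_lagrange_basis_node: "eval R R id x0 (lagrange_basis x0 S) = \<one>"
  using x0 by (simp add: eval_lagrange_basis node_diff_Units R.finprod_one_eqI)

lemma eval_lagrange_basis_root:
  assumes "a \<in> S"
  shows "eval R R id a (lagrange_basis x0 S) = \<zero>"
proof -
  have a: "a \<in> carrier R" using assms S by blast
  have "(\<Otimes>b\<in>S. inv (x0 \<ominus> b) \<otimes> (a \<ominus> b)) = (\<Otimes>b\<in>insert a (S - {a}). inv (x0 \<ominus> b) \<otimes> (a \<ominus> b))"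
    using assms by (simp add: insert_absorb)
  also have "\<dots> = inv (x0 \<ominus> a) \<otimes> (a \<ominus> a) \<otimes> (\<Otimes>b\<in>S - {a}. inv (x0 \<ominus> b) \<otimes> (a \<ominus> b))"
    using assms a S inv_node_diff_closed by (intro R.finprod_insert[of "S - {a}"]) auto
  also have "\<dots> = \<zero>"
  proof -
    have "(\<Otimes>b\<in>S - {a}. inv (x0 \<ominus> b) \<otimes> (a \<ominus> b)) \<in> carrier R"
      using a S inv_node_diff_closed by (intro R.finprod_closed) auto
    moreover have "a \<ominus> a = \<zero>" using a by (simp add: R.minus_eq R.r_neg)
    ultimately show ?thesis using assms inv_node_diff_closed by simp
  qed
  finally show ?thesis
    using assms S by (simp add: eval_lagrange_basis subsetD)
qed

end

end

section \<open>Communication cost and double counting\<close>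

lemma sum_div_le_comm_cost:
  assumes "A \<subseteq> {1..N}" "card A = Nr"
  shows "(\<Sum>n\<in>A. real (T n)) / real L \<le> comm_cost N Nr L T"
proof -
  have "{(\<Sum>n\<in>A. real (T n)) / real L | A. A \<subseteq> {1..N} \<and> card A = Nr} =
      (\<lambda>A. (\<Sum>n\<in>A. real (T n)) / real L) ` {A. A \<subseteq> {1..N} \<and> card A = Nr}"
    by auto
  then show ?thesis
    unfolding comm_cost_def using assms by (intro Max_ge) auto
qed

lemma comm_cost_const:
  assumes "Nr \<le> N" "0 < L"
  shows "comm_cost N Nr L (\<lambda>_. L) = real Nr"
proof -
  obtain A where "A \<subseteq> {1..N}" "card A = Nr"
    using assms(1) obtain_subset_with_card_n[of Nr "{1..N}"] by auto
  then have "{(\<Sum>n\<in>A. real L) / real L | A. A \<subseteq> {1..N} \<and> card A = Nr} = {real Nr}"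
    using assms(2) by auto
  then show ?thesis by (simp add: comm_cost_def)
qed

lemma sum_card_holders:
  assumes "finite I" "finite J" "\<And>n. n \<in> I \<Longrightarrow> Z n \<subseteq> J"
  shows "(\<Sum>j\<in>J. card {n \<in> I. j \<in> Z n}) = (\<Sum>n\<in>I. card (Z n))"
proof -
  have "(\<Sum>j\<in>J. card {n \<in> I. j \<in> Z n}) = (\<Sum>j\<in>J. \<Sum>n\<in>I. if j \<in> Z n then 1 else 0)"
    using assms by (simp add: sum.If_cases Int_def conj_commute)
  also have "\<dots> = (\<Sum>n\<in>I. \<Sum>j\<in>J. if j \<in> Z n then 1 else 0)"
    by (rule sum.swap)
  also have "\<dots> = (\<Sum>n\<in>I. card (Z n))"
    using assms by (intro sum.cong refl) (simp add: sum.If_cases Int_absorb1)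
  finally show ?thesis .
qed

section \<open>Message tuples\<close>

locale messages = abelian_group R for R :: "nat ring" (structure) + fixes K L :: nat
begin

lemma msg_space_memD: "w \<in> msg_space R K L \<Longrightarrow> k \<in> {1..K} \<Longrightarrow> l < L \<Longrightarrow> w k l \<in> carrier R"
  unfolding msg_space_def by (auto simp: PiE_iff)

lemma msg_space_restrictI:
  "(\<And>k l. k \<in> {1..K} \<Longrightarrow> l < L \<Longrightarrow> f k l \<in> carrier R) \<Longrightarrow>
    (\<lambda>k\<in>{1..K}. \<lambda>l\<in>{..<L}. f k l) \<in> msg_space R K L"
  unfolding msg_space_def by (auto simp: PiE_iff)

lemma msg_space_eqI:
  assumes "w \<in> msg_space R K L" "w' \<in> msg_space R K L"
    and "\<And>k l. k \<in> {1..K} \<Longrightarrow> l < L \<Longrightarrow> w k l = w' k l"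
  shows "w = w'"
proof (rule PiE_ext[OF assms(1,2)[unfolded msg_space_def]])
  fix k assume k: "k \<in> {1..K}"
  show "w k = w' k"
    by (rule PiE_ext[OF PiE_mem[OF assms(1)[unfolded msg_space_def] k]
          PiE_mem[OF assms(2)[unfolded msg_space_def] k]])
      (use assms(3) k in simp)
qed

lemma finite_msg_space: "finite (carrier R) \<Longrightarrow> finite (msg_space R K L)"
  unfolding msg_space_def by (intro finite_PiE) auto

lemma msg_sum_apply [simp]: "l < L \<Longrightarrow> msg_sum R K L w l = (\<Oplus>k\<in>{1..K}. w k l)"
  by (simp add: msg_sum_def)

lemma msg_sum_eqI:
  "(\<And>l. l < L \<Longrightarrow> msg_sum R K L w l = msg_sum R K L w' l) \<Longrightarrow> msg_sum R K L w = msg_sum R K L w'"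
  unfolding msg_sum_def by (auto intro: restrict_ext)

lemma msg_sum_closed: "w \<in> msg_space R K L \<Longrightarrow> l < L \<Longrightarrow> msg_sum R K L w l \<in> carrier R"
  using msg_space_memD by simp

definition vectors :: "(nat \<Rightarrow> nat) set" where
  "vectors = PiE {..<L} (\<lambda>_. carrier R)"

definition single_msg :: "nat \<Rightarrow> (nat \<Rightarrow> nat) \<Rightarrow> nat \<Rightarrow> nat \<Rightarrow> nat" where
  "single_msg j v = (\<lambda>k\<in>{1..K}. if k = j then v else (\<lambda>l\<in>{..<L}. \<zero>))"

lemma card_vectors: "card vectors = card (carrier R) ^ L"
  by (simp add: vectors_def card_PiE)

lemma single_msg_closed: "j \<in> {1..K} \<Longrightarrow> v \<in> vectors \<Longrightarrow> single_msg j v \<in> msg_space R K L"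
  by (auto simp: single_msg_def msg_space_def vectors_def)

lemma msg_sum_single_msg:
  assumes j: "j \<in> {1..K}" and v: "v \<in> vectors"
  shows "msg_sum R K L (single_msg j v) = v"
proof
  fix l
  show "msg_sum R K L (single_msg j v) l = v l"
  proof (cases "l < L")
    case True
    have "v l \<in> carrier R" using v True by (auto simp: vectors_def)
    with True have "msg_sum R K L (single_msg j v) l = (\<Oplus>k\<in>{1..K}. if j = k then v l else \<zero>)"
        by (intro trans[OF msg_sum_apply finsum_cong']) (simp_all add: single_msg_def)
    also have "\<dots> = v l"
      using j \<open>v l \<in> carrier R\<close> by (simp add: finsum_singleton)
    finally show ?thesis .
  next
    case False
    then show ?thesis
      using PiE_arb[of v "{..<L}" "\<lambda>_. carrier R" l] v by (simp add: msg_sum_def vectors_def)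
  qed
qed

definition msg_add :: "(nat \<Rightarrow> nat \<Rightarrow> nat) \<Rightarrow> (nat \<Rightarrow> nat \<Rightarrow> nat) \<Rightarrow> nat \<Rightarrow> nat \<Rightarrow> nat" where
  "msg_add u v = (\<lambda>k\<in>{1..K}. \<lambda>l\<in>{..<L}. u k l \<oplus> v k l)"

definition msg_neg :: "(nat \<Rightarrow> nat \<Rightarrow> nat) \<Rightarrow> nat \<Rightarrow> nat \<Rightarrow> nat" where
  "msg_neg u = (\<lambda>k\<in>{1..K}. \<lambda>l\<in>{..<L}. \<ominus> u k l)"

definition zero_sum_msgs :: "(nat \<Rightarrow> nat \<Rightarrow> nat) set" where
  "zero_sum_msgs = {z \<in> msg_space R K L. \<forall>l<L. msg_sum R K L z l = \<zero>}"

lemma msg_add_closed: "u \<in> msg_space R K L \<Longrightarrow> v \<in> msg_space R K L \<Longrightarrow> msg_add u v \<in> msg_space R K L"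
  unfolding msg_add_def by (intro msg_space_restrictI) (auto simp: msg_space_memD)

lemma msg_neg_closed: "u \<in> msg_space R K L \<Longrightarrow> msg_neg u \<in> msg_space R K L"
  unfolding msg_neg_def by (intro msg_space_restrictI) (auto simp: msg_space_memD)

lemma msg_sum_msg_add:
  assumes "u \<in> msg_space R K L" "v \<in> msg_space R K L" "l < L"
  shows "msg_sum R K L (msg_add u v) l = msg_sum R K L u l \<oplus> msg_sum R K L v l"
proof -
  have "msg_sum R K L (msg_add u v) l = (\<Oplus>k\<in>{1..K}. u k l \<oplus> v k l)"
    unfolding msg_sum_apply[OF assms(3)]
    using assms by (intro finsum_cong') (simp_all add: msg_add_def msg_space_memD)
  also have "\<dots> = msg_sum R K L u l \<oplus> msg_sum R K L v l"
    using assms by (simp add: finsum_addf msg_space_memD)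
  finally show ?thesis .
qed

lemma msg_add_neg_cancel:
  assumes "u \<in> msg_space R K L" "v \<in> msg_space R K L"
  shows "msg_add (msg_neg u) (msg_add u v) = v" "msg_add u (msg_add (msg_neg u) v) = v"
proof -
  have "\<ominus> u k l \<oplus> (u k l \<oplus> v k l) = v k l" "u k l \<oplus> (\<ominus> u k l \<oplus> v k l) = v k l"
    if "k \<in> {1..K}" "l < L" for k l
    using that assms by (simp_all add: msg_space_memD a_assoc[symmetric] l_neg r_neg)
  then show "msg_add (msg_neg u) (msg_add u v) = v" "msg_add u (msg_add (msg_neg u) v) = v"
    using assms msg_add_closed msg_neg_closed
    by (auto intro!: msg_space_eqI simp del: msg_sum_apply) (auto simp: msg_add_def msg_neg_def)
qed

lemma zero_sum_msgs_subset: "zero_sum_msgs \<subseteq> msg_space R K L"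
  by (auto simp: zero_sum_msgs_def)

lemma zero_sum_msgs_not_empty: "zero_sum_msgs \<noteq> {}"
proof -
  define z where "z = (\<lambda>k\<in>{1..K}. \<lambda>l\<in>{..<L}. \<zero>)"
  have "msg_sum R K L z l = (\<Oplus>k\<in>{1..K}. \<zero>)" if "l < L" for l
    using that by (intro trans[OF msg_sum_apply finsum_cong']) (simp_all add: z_def)
  moreover have "z \<in> msg_space R K L"
    unfolding z_def by (rule msg_space_restrictI) simp
  ultimately have "z \<in> zero_sum_msgs"
    by (simp add: zero_sum_msgs_def del: msg_sum_apply)
  then show ?thesis by blast
qed

lemma finite_zero_sum_msgs: "finite (carrier R) \<Longrightarrow> finite zero_sum_msgs"
  using finite_msg_space zero_sum_msgs_subset by (rule finite_subset[rotated])

lemma msg_sum_msg_add_zero_sum: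
  assumes "w \<in> msg_space R K L" "z \<in> zero_sum_msgs"
  shows "msg_sum R K L (msg_add w z) = msg_sum R K L w"
  using assms by (auto simp: zero_sum_msgs_def msg_sum_msg_add msg_sum_closed
      simp del: msg_sum_apply intro!: msg_sum_eqI)

lemma map_pmf_msg_add_zero_sum_msgs:
  assumes w: "w \<in> msg_space R K L" and fin: "finite (carrier R)"
  shows "map_pmf (msg_add w) (pmf_of_set zero_sum_msgs) =
    pmf_of_set {u \<in> msg_space R K L. msg_sum R K L u = msg_sum R K L w}"
    (is "_ = pmf_of_set ?F")
proof -
  have to_F: "msg_add w ` zero_sum_msgs \<subseteq> ?F"
    using w zero_sum_msgs_subset by (auto simp: msg_add_closed msg_sum_msg_add_zero_sum)
  have from_F: "msg_add (msg_neg w) ` ?F \<subseteq> zero_sum_msgs"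
  proof safe
    fix u assume u: "u \<in> msg_space R K L" "msg_sum R K L u = msg_sum R K L w"
    define d where "d = msg_add (msg_neg w) u"
    have d: "d \<in> msg_space R K L" "msg_add w d = u"
      using u w by (simp_all add: d_def msg_add_closed msg_neg_closed msg_add_neg_cancel)
    have "msg_sum R K L d l = \<zero>" if "l < L" for l
      using msg_sum_msg_add[OF w d(1) that] u w d that
      by (simp add: msg_sum_closed del: msg_sum_apply)
    with d show "d \<in> zero_sum_msgs" by (simp add: zero_sum_msgs_def)
  qed
  have bij: "bij_betw (msg_add w) zero_sum_msgs ?F"
    using to_F from_F w msg_add_neg_cancel
    by (intro bij_betw_byWitness[where f' = "msg_add (msg_neg w)"]) (auto simp: zero_sum_msgs_def)
  from bij zero_sum_msgs_not_empty finite_zero_sum_msgs[OF fin] show ?thesis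
    by (rule map_pmf_of_set_bij_betw)
qed

end

section \<open>The lower bound\<close>

locale decodable_scheme = messages +
  fixes N Nr M :: nat and Z :: "nat \<Rightarrow> nat set" and T :: "nat \<Rightarrow> nat" and Q :: "nat pmf"
    and \<psi> :: "nat \<Rightarrow> (nat \<Rightarrow> nat \<Rightarrow> nat) \<Rightarrow> nat \<Rightarrow> nat list"
  assumes scheme: "secure_scheme R K N Nr M L Z T Q \<psi>"
    and two_le_card_carrier: "2 \<le> card (carrier R)" and L_pos: "0 < L"
begin

lemma assignment_subset: "n \<in> {1..N} \<Longrightarrow> Z n \<subseteq> {1..K}"
  using scheme unfolding secure_scheme_def by (elim conjE) blast

lemma card_assignment_le: "n \<in> {1..N} \<Longrightarrow> card (Z n) \<le> M"
  using scheme unfolding secure_scheme_def by (elim conjE) blast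

lemma answer_in_lists: "n \<in> {1..N} \<Longrightarrow> w \<in> msg_space R K L \<Longrightarrow> q \<in> set_pmf Q \<Longrightarrow>
    \<psi> n w q \<in> {xs. set xs \<subseteq> carrier R \<and> length xs = T n}"
  using scheme unfolding secure_scheme_def by (elim conjE) blast

lemma answer_local: "n \<in> {1..N} \<Longrightarrow> w \<in> msg_space R K L \<Longrightarrow> w' \<in> msg_space R K L \<Longrightarrow>
    q \<in> set_pmf Q \<Longrightarrow> (\<And>k. k \<in> Z n \<Longrightarrow> w k = w' k) \<Longrightarrow> \<psi> n w q = \<psi> n w' q"
  using scheme unfolding secure_scheme_def by (elim conjE) blast

lemma decodable: "A \<subseteq> {1..N} \<Longrightarrow> card A = Nr \<Longrightarrow>
    \<exists>\<phi>. \<forall>w\<in>msg_space R K L. \<forall>q\<in>set_pmf Q. \<phi> (\<lambda>n\<in>A. \<psi> n w q) = msg_sum R K L w"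
  using scheme unfolding secure_scheme_def by (elim conjE) blast

lemma finite_carrier: "finite (carrier R)"
  using two_le_card_carrier by (intro card_ge_0_finite) simp

lemma msg_sum_eq_if_answers_eq:
  assumes "A \<subseteq> {1..N}" "card A = Nr" "w \<in> msg_space R K L" "w' \<in> msg_space R K L"
    and "q \<in> set_pmf Q" "\<And>n. n \<in> A \<Longrightarrow> \<psi> n w q = \<psi> n w' q"
  shows "msg_sum R K L w = msg_sum R K L w'"
proof -
  obtain \<phi> where \<phi>: "\<forall>w\<in>msg_space R K L. \<forall>q\<in>set_pmf Q. \<phi> (\<lambda>n\<in>A. \<psi> n w q) = msg_sum R K L w"
    using decodable[OF assms(1,2)] by blast
  have "(\<lambda>n\<in>A. \<psi> n w q) = (\<lambda>n\<in>A. \<psi> n w' q)"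
    using assms(6) by (rule restrict_ext)
  then show ?thesis using \<phi> assms(3-5) by metis
qed

lemma answer_single_msg_eq:
  assumes "n \<in> {1..N}" "j \<notin> Z n" "j \<in> {1..K}" "v \<in> vectors" "v' \<in> vectors" "q \<in> set_pmf Q"
  shows "\<psi> n (single_msg j v) q = \<psi> n (single_msg j v') q"
proof (rule answer_local)
  fix k assume "k \<in> Z n"
  then have "k \<noteq> j" using assms(2) by blast
  then show "single_msg j v k = single_msg j v' k" by (simp add: single_msg_def)
qed (use assms in \<open>simp_all add: single_msg_closed\<close>)

lemma inj_on_answers_single_msg:
  assumes "A \<subseteq> {1..N}" "card A = Nr" "j \<in> {1..K}" "q \<in> set_pmf Q"
  shows "inj_on (\<lambda>v. \<lambda>n\<in>A. \<psi> n (single_msg j v) q) vectors"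
proof (rule inj_onI)
  fix v v' assume v: "v \<in> vectors" "v' \<in> vectors"
    and eq: "(\<lambda>n\<in>A. \<psi> n (single_msg j v) q) = (\<lambda>n\<in>A. \<psi> n (single_msg j v') q)"
  have "msg_sum R K L (single_msg j v) = msg_sum R K L (single_msg j v')"
  proof (rule msg_sum_eq_if_answers_eq[OF assms(1,2) _ _ assms(4)])
    fix n assume "n \<in> A"
    then show "\<psi> n (single_msg j v) q = \<psi> n (single_msg j v') q"
      using fun_cong[OF eq, of n] by simp
  qed (use assms(3) v in \<open>simp_all add: single_msg_closed\<close>)
  then show "v = v'" using assms(3) v by (simp only: msg_sum_single_msg)
qed

definition lacking_servers :: "nat \<Rightarrow> nat set" where
  "lacking_servers j = {n \<in> {1..N}. j \<notin> Z n}"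

lemma card_lacking_servers_less:
  assumes j: "j \<in> {1..K}"
  shows "card (lacking_servers j) < Nr"
proof (rule ccontr)
  assume "\<not> card (lacking_servers j) < Nr"
  then obtain A where A: "A \<subseteq> lacking_servers j" "card A = Nr"
    by (meson not_less obtain_subset_with_card_n)
  then have A_sub: "A \<subseteq> {1..N}" by (auto simp: lacking_servers_def)
  obtain q where q: "q \<in> set_pmf Q" using set_pmf_not_empty by fast
  define f where "f v = (\<lambda>n\<in>A. \<psi> n (single_msg j v) q)" for v
  define v0 where "v0 = (\<lambda>l\<in>{..<L}. \<zero>)"
  have v0: "v0 \<in> vectors" by (simp add: v0_def vectors_def)
  have "f ` vectors \<subseteq> {f v0}"
    using A j q v0
    by (auto simp: f_def lacking_servers_def intro!: restrict_ext answer_single_msg_eq)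
  then have "card (f ` vectors) \<le> 1"
    using card_mono[of "{f v0}"] by simp
  moreover have "card (f ` vectors) = card vectors"
    unfolding f_def using inj_on_answers_single_msg[OF A_sub A(2) j q] by (rule card_image)
  moreover have "2 ^ L \<le> card vectors"
    using two_le_card_carrier by (simp add: card_vectors power_mono)
  moreover have "1 < (2::nat) ^ L" using L_pos by (intro one_less_power) simp_all
  ultimately show False by linarith
qed

context
  assumes Nr_le_N: "Nr \<le> N" and N_dvd_K: "N dvd K" and M_eq: "M = K div N * (N - Nr + 1)"
    and M_pos: "0 < M"
begin

lemma card_lacking_servers_eq: "j \<in> {1..K} \<Longrightarrow> card (lacking_servers j) = Nr - 1"
  and card_assignment_eq: "n \<in> {1..N} \<Longrightarrow> card (Z n) = M"
proof -
  define c where "c = N - Nr + 1"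
  define holders where "holders j = {n \<in> {1..N}. j \<in> Z n}" for j
  have card_holders: "card (holders j) = N - card (lacking_servers j)" for j
  proof -
    have "holders j = {1..N} - lacking_servers j" "lacking_servers j \<subseteq> {1..N}"
      by (auto simp: holders_def lacking_servers_def)
    then show ?thesis by (simp add: card_Diff_subset finite_subset)
  qed
  have c_le: "c \<le> card (holders j)" if "j \<in> {1..K}" for j
    using card_lacking_servers_less[OF that] Nr_le_N by (simp add: card_holders c_def)
  have double_count: "(\<Sum>j\<in>{1..K}. card (holders j)) = (\<Sum>n\<in>{1..N}. card (Z n))"
    unfolding holders_def using assignment_subset by (intro sum_card_holders) auto
  have storage: "(\<Sum>n\<in>{1..N}. M) = (\<Sum>j\<in>{1..K}. c)"
    using N_dvd_K by (auto simp: M_eq c_def algebra_simps elim!: dvdE)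
  have "(\<Sum>n\<in>{1..N}. card (Z n)) \<le> (\<Sum>n\<in>{1..N}. M)"
    using card_assignment_le by (intro sum_mono) auto
  moreover have "(\<Sum>j\<in>{1..K}. c) \<le> (\<Sum>j\<in>{1..K}. card (holders j))"
    using c_le by (intro sum_mono) auto
  ultimately have tight: "(\<Sum>n\<in>{1..N}. card (Z n)) = (\<Sum>n\<in>{1..N}. M)"
      "(\<Sum>j\<in>{1..K}. c) = (\<Sum>j\<in>{1..K}. card (holders j))"
    using double_count storage by linarith+
  show "card (lacking_servers j) = Nr - 1" if "j \<in> {1..K}"
    using sum_mono_inv[OF tight(2) c_le that] card_lacking_servers_less[OF that]
      card_holders[of j] Nr_le_N
    by (simp add: c_def)
  show "card (Z n) = M" if "n \<in> {1..N}"
    using sum_mono_inv[OF tight(1) card_assignment_le that] by simp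
qed

lemma length_answer_ge:
  assumes n: "n \<in> {1..N}"
  shows "L \<le> T n"
proof -
  have "Z n \<noteq> {}" using card_assignment_eq[OF n] M_pos by auto
  then obtain j where j: "j \<in> Z n" by blast
  have j_K: "j \<in> {1..K}" using assignment_subset[OF n] j by blast
  obtain q where q: "q \<in> set_pmf Q" using set_pmf_not_empty by fast
  define A where "A = insert n (lacking_servers j)"
  have A: "A \<subseteq> {1..N}" "card A = Nr"
    using n j card_lacking_servers_eq[OF j_K] card_lacking_servers_less[OF j_K]
    by (auto simp: A_def lacking_servers_def)
  have "inj_on (\<lambda>v. \<psi> n (single_msg j v) q) vectors"
  proof (rule inj_onI)
    fix v v' assume v: "v \<in> vectors" "v' \<in> vectors"
      and eq: "\<psi> n (single_msg j v) q = \<psi> n (single_msg j v') q"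
    have "(\<lambda>m\<in>A. \<psi> m (single_msg j v) q) = (\<lambda>m\<in>A. \<psi> m (single_msg j v') q)"
      using eq v j_K q
      by (auto simp: A_def lacking_servers_def intro!: restrict_ext answer_single_msg_eq)
    then show "v = v'"
      using inj_onD[OF inj_on_answers_single_msg[OF A j_K q]] v by blast
  qed
  moreover have "(\<lambda>v. \<psi> n (single_msg j v) q) ` vectors \<subseteq>
      {xs. set xs \<subseteq> carrier R \<and> length xs = T n}"
    using answer_in_lists[OF n single_msg_closed[OF j_K] q] by blast
  ultimately have "card vectors \<le> card {xs. set xs \<subseteq> carrier R \<and> length xs = T n}"
    using finite_carrier by (intro card_inj_on_le finite_lists_length_eq)
  then have "card (carrier R) ^ L \<le> card (carrier R) ^ T n"
    by (simp add: card_vectors card_lists_length_eq finite_carrier)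
  then show ?thesis
    using two_le_card_carrier by (simp add: power_le_imp_le_exp)
qed

lemma comm_cost_ge_Nr: "real Nr \<le> comm_cost N Nr L T"
proof -
  obtain A where A: "A \<subseteq> {1..N}" "card A = Nr"
    using Nr_le_N obtain_subset_with_card_n[of Nr "{1..N}"] by auto
  have "real Nr * real L = (\<Sum>n\<in>A. real L)" using A by simp
  also have "\<dots> \<le> (\<Sum>n\<in>A. real (T n))"
    using A length_answer_ge by (intro sum_mono) auto
  finally have "real Nr \<le> (\<Sum>n\<in>A. real (T n)) / real L"
    using L_pos by (simp add: field_simps)
  also have "\<dots> \<le> comm_cost N Nr L T"
    using A by (rule sum_div_le_comm_cost)
  finally show ?thesis .
qed

end

end

section \<open>A cyclic secure scheme\<close>

lemma add_mod_eq_imp_eq: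
  fixes a i j N :: nat
  assumes "(a + i) mod N = (a + j) mod N" "i < N" "j < N"
  shows "i = j"
proof -
  have "i = j" if le: "i \<le> j" and eq: "(a + j) mod N = (a + i) mod N" and lt: "j < N" for i j
  proof -
    obtain s where "a + j = a + i + N * s"
      using mod_eq_nat1E[OF eq] le by auto
    with lt show ?thesis by (cases s) auto
  qed
  from this[of i j] this[of j i] assms show ?thesis by linarith
qed

lemma add_mod_diff_mod:
  fixes a i N :: nat
  assumes "a < N" "i \<le> N"
  shows "((a + i) mod N + N - i) mod N = a"
proof -
  have "((a + i) mod N + N - i) mod N = ((a + i) mod N + (N - i)) mod N"
    using assms(2) by (simp only: add_diff_assoc)
  also have "\<dots> = (a + i + (N - i)) mod N"
    by (rule mod_add_left_eq)
  also have "\<dots> = (a + N) mod N"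
    using assms(2) by simp
  finally show ?thesis using assms(1) by simp
qed

lemma ex_decoder:
  assumes "\<And>w q w' q'. w \<in> W \<Longrightarrow> q \<in> B \<Longrightarrow> w' \<in> W \<Longrightarrow> q' \<in> B \<Longrightarrow> f w q = f w' q' \<Longrightarrow> g w = g w'"
  shows "\<exists>\<phi>. \<forall>w\<in>W. \<forall>q\<in>B. \<phi> (f w q) = g w"
proof (intro exI ballI)
  fix w q assume wq: "w \<in> W" "q \<in> B"
  define p where "p = inv_into (W \<times> B) (\<lambda>(w, q). f w q) (f w q)"
  have img: "f w q \<in> (\<lambda>(w, q). f w q) ` (W \<times> B)" using wq by force
  have "p \<in> W \<times> B" "(\<lambda>(w, q). f w q) p = f w q"
    unfolding p_def by (rule inv_into_into[OF img], rule f_inv_into_f[OF img])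
  then show "g (fst p) = g w"
    using assms[of "fst p" "snd p" w q] wq by (simp add: mem_Times_iff case_prod_beta)
qed

locale cyclic_scheme = UP_field R P + messages R K L
  for R :: "nat ring" (structure) and P (structure) and K L :: nat +
  fixes N Nr m :: nat and \<beta> :: "nat \<Rightarrow> nat"
  assumes finite_carrier: "finite (carrier R)" and L_pos: "0 < L"
    and Nr_pos: "0 < Nr" and Nr_le_N: "Nr \<le> N" and K_eq: "K = N * m"
    and \<beta>_carrier: "\<beta> ` {0..N} \<subseteq> carrier R" and inj_\<beta>: "inj_on \<beta> {0..N}"
begin

definition data_group :: "nat \<Rightarrow> nat" where
  "data_group k = (k - 1) div m + 1"

text \<open>Server n misses the groups n + 1, ..., n + Nr - 1, counted cyclically in {1..N}.\<close>
definition missing_groups :: "nat \<Rightarrow> nat set" where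
  "missing_groups n = (\<lambda>i. (n - 1 + i) mod N + 1) ` {1..<Nr}"

definition lacking_servers :: "nat \<Rightarrow> nat set" where
  "lacking_servers g = {n \<in> {1..N}. g \<in> missing_groups n}"

definition assignment :: "nat \<Rightarrow> nat set" where
  "assignment n = {k \<in> {1..K}. data_group k \<notin> missing_groups n}"

lemma N_pos: "0 < N"
  using Nr_pos Nr_le_N by simp

lemma data_group_range:
  assumes "k \<in> {1..K}"
  shows "data_group k \<in> {1..N}"
proof -
  have "k - 1 < N * m" using assms K_eq by auto
  then have "(k - 1) div m < N" by (simp add: less_mult_imp_div_less)
  then show ?thesis by (simp add: data_group_def)
qed

lemma card_data_group_le: "card {k \<in> {1..K}. data_group k = g} \<le> m"
proof -
  let ?G = "{k \<in> {1..K}. data_group k = g}"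
  have "inj_on (\<lambda>k. (k - 1) mod m) ?G"
  proof (rule inj_onI)
    fix k k' assume "k \<in> ?G" "k' \<in> ?G" and "(k - 1) mod m = (k' - 1) mod m"
    then have "k \<ge> 1" "k' \<ge> 1" "(k - 1) div m = (k' - 1) div m" "(k - 1) mod m = (k' - 1) mod m"
      by (auto simp: data_group_def)
    then show "k = k'" by (metis div_mult_mod_eq le_add_diff_inverse2)
  qed
  moreover have "(\<lambda>k. (k - 1) mod m) ` ?G \<subseteq> {..<m}"
  proof (rule image_subsetI)
    fix k assume "k \<in> ?G"
    then have "0 < m" using K_eq by (cases m) auto
    then show "(k - 1) mod m \<in> {..<m}" by simp
  qed
  ultimately show ?thesis
    using card_inj_on_le[of _ ?G "{..<m}"] by simp
qed

lemma missing_groups_subset: "missing_groups n \<subseteq> {1..N}"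
  using N_pos by (auto simp: missing_groups_def Suc_le_eq)

lemma card_missing_groups: "card (missing_groups n) = Nr - 1"
proof -
  have "inj_on (\<lambda>i. (n - 1 + i) mod N + 1) {1..<Nr}"
    using Nr_le_N by (intro inj_onI) (auto dest: add_mod_eq_imp_eq)
  then show ?thesis by (simp add: missing_groups_def card_image)
qed

lemma card_lacking_servers_le:
  "card (lacking_servers g) \<le> Nr - 1"
proof -
  have "lacking_servers g \<subseteq> (\<lambda>i. (g - 1 + N - i) mod N + 1) ` {1..<Nr}"
  proof
    fix n assume "n \<in> lacking_servers g"
    then obtain i where n: "n \<in> {1..N}" and i: "i \<in> {1..<Nr}" and g: "g = (n - 1 + i) mod N + 1"
      by (auto simp: lacking_servers_def missing_groups_def)
    have "(g - 1 + N - i) mod N = ((n - 1 + i) mod N + N - i) mod N" using g by simp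
    also have "\<dots> = n - 1"
      using n i Nr_le_N by (intro add_mod_diff_mod) auto
    finally show "n \<in> (\<lambda>i. (g - 1 + N - i) mod N + 1) ` {1..<Nr}"
      using n i by force
  qed
  then have "card (lacking_servers g) \<le> card ((\<lambda>i. (g - 1 + N - i) mod N + 1) ` {1..<Nr})"
    by (intro card_mono) auto
  also have "\<dots> \<le> Nr - 1"
    using card_image_le[of "{1..<Nr}"] by simp
  finally show ?thesis .
qed

lemma card_assignment_le: "card (assignment n) \<le> m * (N - Nr + 1)"
proof -
  let ?G = "\<lambda>g. {k \<in> {1..K}. data_group k = g}"
  have "assignment n \<subseteq> (\<Union>g\<in>{1..N} - missing_groups n. ?G g)"
    using data_group_range by (auto simp: assignment_def)
  then have "card (assignment n) \<le> card (\<Union>g\<in>{1..N} - missing_groups n. ?G g)"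
    by (intro card_mono) auto
  also have "\<dots> \<le> (\<Sum>g\<in>{1..N} - missing_groups n. card (?G g))"
    by (rule card_UN_le) simp
  also have "\<dots> \<le> (\<Sum>g\<in>{1..N} - missing_groups n. m)"
    by (intro sum_mono card_data_group_le)
  also have "\<dots> = m * (N - Nr + 1)"
  proof -
    have "card ({1..N} - missing_groups n) = N - (Nr - 1)"
      using card_Diff_subset[OF finite_subset[OF missing_groups_subset] missing_groups_subset]
      by (simp add: card_missing_groups)
    then show ?thesis using Nr_pos Nr_le_N by (simp add: Suc_diff_le algebra_simps)
  qed
  finally show ?thesis .
qed

definition group_poly :: "nat \<Rightarrow> nat \<Rightarrow> nat" where
  "group_poly g = lagrange_basis (\<beta> 0) (\<beta> ` lacking_servers g)"

lemma \<beta>_closed: "n \<in> {0..N} \<Longrightarrow> \<beta> n \<in> carrier R"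
  using \<beta>_carrier by blast

lemma lacking_nodes:
  "finite (\<beta> ` lacking_servers g)" "\<beta> ` lacking_servers g \<subseteq> carrier R"
  "\<beta> 0 \<in> carrier R" "\<beta> 0 \<notin> \<beta> ` lacking_servers g"
proof -
  have sub: "lacking_servers g \<subseteq> {1..N}" by (auto simp: lacking_servers_def)
  then show "finite (\<beta> ` lacking_servers g)" by (simp add: finite_subset)
  show "\<beta> ` lacking_servers g \<subseteq> carrier R"
    using sub by (intro image_subsetI \<beta>_closed) auto
  show "\<beta> 0 \<in> carrier R"
    by (simp add: \<beta>_closed)
  show "\<beta> 0 \<notin> \<beta> ` lacking_servers g"
    using sub inj_onD[OF inj_\<beta>] by fastforce
qed

lemma group_poly_closed: "group_poly g \<in> carrier P"
  unfolding group_poly_def using lacking_nodes by (rule lagrange_basis_closed)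

lemma deg_group_poly_le: "deg R (group_poly g) \<le> Nr - 1"
proof -
  have "deg R (group_poly g) \<le> card (\<beta> ` lacking_servers g)"
    unfolding group_poly_def using lacking_nodes by (rule deg_lagrange_basis_le)
  also have "\<dots> \<le> Nr - 1"
    using card_image_le[of "lacking_servers g" \<beta>] card_lacking_servers_le[of g]
    by (simp add: lacking_servers_def)
  finally show ?thesis .
qed

lemma eval_group_poly_node: "eval R R id (\<beta> 0) (group_poly g) = \<one>"
  unfolding group_poly_def using lacking_nodes by (rule eval_lagrange_basis_node)

lemma eval_group_poly_lacking:
  "n \<in> lacking_servers g \<Longrightarrow> eval R R id (\<beta> n) (group_poly g) = \<zero>"
  unfolding group_poly_def using lacking_nodes by (intro eval_lagrange_basis_root) auto

definition answer_poly :: "(nat \<Rightarrow> nat \<Rightarrow> nat) \<Rightarrow> nat \<Rightarrow> nat \<Rightarrow> nat" where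
  "answer_poly u l = (\<Oplus>\<^bsub>P\<^esub> k\<in>{1..K}. u k l \<odot>\<^bsub>P\<^esub> group_poly (data_group k))"

lemma answer_poly_closed: "u \<in> msg_space R K L \<Longrightarrow> l < L \<Longrightarrow> answer_poly u l \<in> carrier P"
  unfolding answer_poly_def by (auto intro!: P.finsum_closed simp: msg_space_memD group_poly_closed)

lemma deg_answer_poly_le:
  assumes "u \<in> msg_space R K L" "l < L"
  shows "deg R (answer_poly u l) \<le> Nr - 1"
  unfolding answer_poly_def using assms deg_group_poly_le
  by (intro deg_finsum_le le_trans[OF deg_smult_ring]) (auto simp: msg_space_memD group_poly_closed)

lemma eval_answer_poly:
  assumes "u \<in> msg_space R K L" "l < L" "x \<in> carrier R"
  shows "eval R R id x (answer_poly u l) =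
    (\<Oplus>k\<in>{1..K}. u k l \<otimes> eval R R id x (group_poly (data_group k)))"
  unfolding answer_poly_def using assms
  by (subst evalRR_finsum)
    (auto intro!: R.finsum_cong' simp: evalRR_smult msg_space_memD group_poly_closed carrier_evalRR)

lemma eval_answer_poly_node:
  assumes "u \<in> msg_space R K L" "l < L"
  shows "eval R R id (\<beta> 0) (answer_poly u l) = msg_sum R K L u l"
  using assms by (auto simp: eval_answer_poly \<beta>_closed eval_group_poly_node msg_space_memD
      intro!: R.finsum_cong')

definition answers :: "(nat \<Rightarrow> nat \<Rightarrow> nat) \<Rightarrow> nat \<Rightarrow> nat list" where
  "answers u = (\<lambda>n\<in>{1..N}. map (\<lambda>l. eval R R id (\<beta> n) (answer_poly u l)) [0..<L])"

lemma answers_local: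
  assumes n: "n \<in> {1..N}" and u: "u \<in> msg_space R K L" "u' \<in> msg_space R K L"
    and agree: "\<And>k. k \<in> assignment n \<Longrightarrow> u k = u' k"
  shows "answers u n = answers u' n"
proof -
  have "u k l \<otimes> eval R R id (\<beta> n) (group_poly (data_group k)) =
      u' k l \<otimes> eval R R id (\<beta> n) (group_poly (data_group k))"
    if k: "k \<in> {1..K}" and l: "l < L" for k l
  proof (cases "k \<in> assignment n")
    case False
    then have "n \<in> lacking_servers (data_group k)"
      using n k by (simp add: assignment_def lacking_servers_def)
    then show ?thesis
      using u k l by (simp add: eval_group_poly_lacking msg_space_memD)
  qed (simp add: agree)
  then show ?thesis
    using n u by (auto simp: answers_def eval_answer_poly \<beta>_closed msg_space_memD carrier_evalRR
        group_poly_closed intro!: R.finsum_cong')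
qed

lemma answers_determine_msg_sum:
  assumes A: "A \<subseteq> {1..N}" "card A = Nr" and u: "u \<in> msg_space R K L" "u' \<in> msg_space R K L"
    and eq: "\<And>n. n \<in> A \<Longrightarrow> answers u n = answers u' n"
  shows "msg_sum R K L u = msg_sum R K L u'"
proof (rule msg_sum_eqI)
  fix l assume l: "l < L"
  have "inj_on \<beta> A" using A(1) by (intro inj_on_subset[OF inj_\<beta>]) auto
  then have card_\<beta>A: "card (\<beta> ` A) = Nr" using A(2) by (simp add: card_image)
  have deg: "deg R (answer_poly v l) < card (\<beta> ` A)" if "v \<in> msg_space R K L" for v
    using deg_answer_poly_le[OF that l] card_\<beta>A Nr_pos by linarith
  have "answer_poly u l = answer_poly u' l"
  proof (intro poly_eqI_eval_on_card_gt_deg[OF finite_carrier, of _ _ "\<beta> ` A"])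
    show "\<beta> ` A \<subseteq> carrier R" using A(1) by (intro image_subsetI \<beta>_closed) auto
    show "eval R R id x (answer_poly u l) = eval R R id x (answer_poly u' l)" if "x \<in> \<beta> ` A" for x
    proof -
      obtain n where n: "n \<in> A" "x = \<beta> n" using \<open>x \<in> \<beta> ` A\<close> by blast
      then have "map (\<lambda>l. eval R R id x (answer_poly u l)) [0..<L] =
          map (\<lambda>l. eval R R id x (answer_poly u' l)) [0..<L]"
        using eq[OF n(1)] A(1) by (auto simp: answers_def)
      then show ?thesis using l by (simp add: map_eq_conv)
    qed
  qed (use u l deg in \<open>simp_all add: answer_poly_closed\<close>)
  then show "msg_sum R K L u l = msg_sum R K L u' l"
    using eval_answer_poly_node u l by metis
qed

text \<open>The common randomness is a pmf on nat, so the noise tuple is passed by its index.\<close>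
definition noise_pmf :: "nat pmf" where
  "noise_pmf = map_pmf (to_nat_on zero_sum_msgs) (pmf_of_set zero_sum_msgs)"

definition encoder :: "nat \<Rightarrow> (nat \<Rightarrow> nat \<Rightarrow> nat) \<Rightarrow> nat \<Rightarrow> nat list" where
  "encoder n w q = answers (msg_add w (from_nat_into zero_sum_msgs q)) n"

lemma set_noise_pmf: "set_pmf noise_pmf = to_nat_on zero_sum_msgs ` zero_sum_msgs"
  using finite_zero_sum_msgs[OF finite_carrier] zero_sum_msgs_not_empty by (simp add: noise_pmf_def)

lemma finite_set_noise_pmf: "finite (set_pmf noise_pmf)"
  using finite_zero_sum_msgs[OF finite_carrier] by (simp add: set_noise_pmf)

lemma noise_of_index: "q \<in> set_pmf noise_pmf \<Longrightarrow> from_nat_into zero_sum_msgs q \<in> zero_sum_msgs"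
  using countable_finite[OF finite_zero_sum_msgs[OF finite_carrier]] by (auto simp: set_noise_pmf)

lemma masked_msg_closed:
  "w \<in> msg_space R K L \<Longrightarrow> q \<in> set_pmf noise_pmf \<Longrightarrow>
    msg_add w (from_nat_into zero_sum_msgs q) \<in> msg_space R K L"
  using noise_of_index zero_sum_msgs_subset by (blast intro: msg_add_closed)

lemma map_pmf_encoders:
  assumes "w \<in> msg_space R K L"
  shows "map_pmf (\<lambda>q. \<lambda>n\<in>{1..N}. encoder n w q) noise_pmf =
    map_pmf answers (pmf_of_set {u \<in> msg_space R K L. msg_sum R K L u = msg_sum R K L w})"
proof -
  have "map_pmf (\<lambda>q. \<lambda>n\<in>{1..N}. encoder n w q) noise_pmf =
      map_pmf (\<lambda>z. answers (msg_add w z)) (pmf_of_set zero_sum_msgs)"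
    unfolding noise_pmf_def map_pmf_comp
  proof (rule map_pmf_cong[OF refl])
    fix z assume "z \<in> set_pmf (pmf_of_set zero_sum_msgs)"
    then have "from_nat_into zero_sum_msgs (to_nat_on zero_sum_msgs z) = z"
      using countable_finite[OF finite_zero_sum_msgs[OF finite_carrier]] zero_sum_msgs_not_empty
        finite_zero_sum_msgs[OF finite_carrier]
      by (simp add: from_nat_into_to_nat_on)
    then show "(\<lambda>n\<in>{1..N}. encoder n w (to_nat_on zero_sum_msgs z)) = answers (msg_add w z)"
      unfolding encoder_def answers_def by (intro restrict_ext) simp
  qed
  also have "\<dots> = map_pmf answers (map_pmf (msg_add w) (pmf_of_set zero_sum_msgs))"
    by (simp add: map_pmf_comp)
  finally show ?thesis
    using assms finite_carrier by (simp add: map_pmf_msg_add_zero_sum_msgs)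
qed

lemma decodable_cyclic:
  assumes A: "A \<subseteq> {1..N}" "card A = Nr"
  shows "\<exists>\<phi>. \<forall>w\<in>msg_space R K L. \<forall>q\<in>set_pmf noise_pmf.
    \<phi> (\<lambda>n\<in>A. encoder n w q) = msg_sum R K L w"
proof (rule ex_decoder)
  fix w q w' q' assume w: "w \<in> msg_space R K L" "q \<in> set_pmf noise_pmf"
    and w': "w' \<in> msg_space R K L" "q' \<in> set_pmf noise_pmf"
    and eq: "(\<lambda>n\<in>A. encoder n w q) = (\<lambda>n\<in>A. encoder n w' q')"
  have "msg_sum R K L (msg_add w (from_nat_into zero_sum_msgs q)) =
      msg_sum R K L (msg_add w' (from_nat_into zero_sum_msgs q'))"
  proof (rule answers_determine_msg_sum[OF A])
    fix n assume "n \<in> A"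
    then show "answers (msg_add w (from_nat_into zero_sum_msgs q)) n =
        answers (msg_add w' (from_nat_into zero_sum_msgs q')) n"
      using fun_cong[OF eq, of n] by (simp add: encoder_def)
  qed (use masked_msg_closed w w' in auto)
  then show "msg_sum R K L w = msg_sum R K L w'"
    using w w' noise_of_index by (simp add: msg_sum_msg_add_zero_sum)
qed

lemma secure_cyclic:
  "cond_mutual_info (map_pmf (\<lambda>(w, q). (w, \<lambda>n\<in>{1..N}. encoder n w q, msg_sum R K L w))
    (pair_pmf (pmf_of_set (msg_space R K L)) noise_pmf)) = 0"
proof (rule cond_mutual_info_uniform_eq_0)
  show "finite (msg_space R K L)" using finite_carrier by (rule finite_msg_space)
  show "msg_space R K L \<noteq> {}" using zero_sum_msgs_not_empty zero_sum_msgs_subset by blast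
  fix w w' assume "w \<in> msg_space R K L" "w' \<in> msg_space R K L" "msg_sum R K L w = msg_sum R K L w'"
  then show "map_pmf (\<lambda>q. \<lambda>n\<in>{1..N}. encoder n w q) noise_pmf =
      map_pmf (\<lambda>q. \<lambda>n\<in>{1..N}. encoder n w' q) noise_pmf"
    by (simp only: map_pmf_encoders)
qed (rule finite_set_noise_pmf)

lemma secure_scheme_cyclic:
  "secure_scheme R K N Nr (m * (N - Nr + 1)) L assignment (\<lambda>_. L) noise_pmf encoder"
  unfolding secure_scheme_def
proof (intro conjI ballI allI impI finite_set_noise_pmf secure_cyclic)
  fix n assume n: "n \<in> {1..N}"
  show "assignment n \<subseteq> {1..K}" by (auto simp: assignment_def)
  show "card (assignment n) \<le> m * (N - Nr + 1)" by (rule card_assignment_le)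
  fix w q assume w: "w \<in> msg_space R K L" and q: "q \<in> set_pmf noise_pmf"
  show "length (encoder n w q) = L"
    using n by (simp add: encoder_def answers_def)
  show "set (encoder n w q) \<subseteq> carrier R"
    using n masked_msg_closed[OF w q]
    by (auto simp: encoder_def answers_def \<beta>_closed answer_poly_closed intro!: carrier_evalRR)
  fix w' assume w': "w' \<in> msg_space R K L" and agree: "\<forall>k\<in>assignment n. w k = w' k"
  show "encoder n w q = encoder n w' q"
    unfolding encoder_def using n masked_msg_closed[OF w q] masked_msg_closed[OF w' q] agree
    by (intro answers_local) (auto simp: msg_add_def assignment_def)
qed (use decodable_cyclic in blast)

end

lemma Nr_in_achievable_costs:
  assumes R: "field R" "finite (carrier R)" "N + 1 \<le> card (carrier R)"
    and "0 < L" "0 < Nr" "Nr \<le> N" "N dvd K" "M = K div N * (N - Nr + 1)"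
  shows "real Nr \<in> achievable_costs R K N Nr M L"
proof -
  interpret field R by fact
  obtain \<beta> where \<beta>: "\<beta> ` {0..N} \<subseteq> carrier R" "inj_on \<beta> {0..N}"
    using R card_le_inj[of "{0..N}" "carrier R"] by auto
  interpret cyclic_scheme R "UP R" K L N Nr "K div N" \<beta>
  proof (intro cyclic_scheme.intro cyclic_scheme_axioms.intro)
    show "UP_field R" by (simp add: UP_field_def field_axioms)
    show "messages R" by (simp add: messages_def is_abelian_group)
  qed (use assms \<beta> in auto)
  show ?thesis
    unfolding achievable_costs_def
    using secure_scheme_cyclic comm_cost_const[OF assms(6,4)] assms(8) by force
qed

lemma achievable_costs_ge_Nr:
  assumes "abelian_group R" "2 \<le> card (carrier R)" "0 < L"
    and "Nr \<le> N" "N dvd K" "M = K div N * (N - Nr + 1)" "0 < M"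
    and "r \<in> achievable_costs R K N Nr M L"
  shows "real Nr \<le> r"
proof -
  obtain Z T Q \<psi> where r: "r = comm_cost N Nr L T" and scheme: "secure_scheme R K N Nr M L Z T Q \<psi>"
    using assms(8) unfolding achievable_costs_def by blast
  interpret decodable_scheme R K L N Nr M Z T Q \<psi>
    using assms(1-3) scheme
    by (simp add: decodable_scheme_def decodable_scheme_axioms_def messages_def)
  show ?thesis
    unfolding r using assms(4-7) by (rule comm_cost_ge_Nr)
qed

theorem theorem1:
  fixes K N Nr M :: nat
  assumes "0 < K" "0 < N" "0 < Nr" "0 < M"
    and "Nr \<le> N" and "N dvd K"
    and "M = (K div N) * (N - Nr + 1)"
  shows "\<exists>q0::nat. \<forall>R :: nat ring.
           field R \<and> finite (carrier R) \<and> q0 \<le> card (carrier R) \<longrightarrow>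
           (\<forall>L::nat. 0 < L \<longrightarrow> real Nr \<in> achievable_costs R K N Nr M L \<and>
                (\<forall>r\<in>achievable_costs R K N Nr M L. real Nr \<le> r))"
proof (intro exI[of _ "N + 1"] allI impI conjI ballI)
  fix R :: "nat ring" and L :: nat
  assume R: "field R \<and> finite (carrier R) \<and> N + 1 \<le> card (carrier R)" and L: "0 < L"
  then show "real Nr \<in> achievable_costs R K N Nr M L"
    using assms by (intro Nr_in_achievable_costs) auto
  have "abelian_group R" using R by (simp add: field.is_ring ring.is_abelian_group)
  fix r assume "r \<in> achievable_costs R K N Nr M L"
  with \<open>abelian_group R\<close> show "real Nr \<le> r"
    using R L assms by (intro achievable_costs_ge_Nr) auto
qed

end
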